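(* Assume the standing setting below, and suppose Assumptions (A1), (A2), (A3) hold with $L_Z>0$. Fix $\sigma\in(\lambda,1)$, $\eta^0>0$ and $\omega\in[0,\bar\omega(\sigma))$. Let $\{z^k\}$ be generated by the quantized algorithm (Q-M), where at every iteration $k$ every quantizer $\mathcal Q_i^k$ satisfies the BC-rule with bias $\eta=\eta^0\sigma^k$ and compression rate $\omega$. Then for all $k=0,1,2,\dots$, $$\sqrt{\mathbb E\big[\|z^k-z^\infty\|_2^2\big]}\le V_0\,\sigma^k,$$ where $$V_0=\max\{c^*,\|z^0-z^\infty\|\}+\frac{L_A\psi\sqrt{md}\,R^2\eta^0}{\sigma-\lambda}\cdot\frac{1+\frac{R\omega}{\sigma}\big[(1+L_C\sigma)\psi-1\big]}{1-\omega/\bar\omega(\sigma)},$$ with $\psi=\max\{1,(2L_C)^{R-1}\}$ and $c^*=\frac{1}{L_Z}\max_{s\in[R]}\|\mathcal C^s(z^0,0)\|_2$.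
   Context: Standing setting. Let $m,d,R\ge 1$ be integers, $p\ge1$, and $\mathcal Z\subseteq\mathbb R^p$. Let $\mathcal C^s:\mathcal Z\times\mathbb R^{md}\to\mathbb R^{md}$ for $s\in[R]=\{1,\dots,R\}$ and $\mathcal A:\mathcal Z\times(\mathbb R^{md})^R\to\mathcal Z$. Define $\tilde{\mathcal A}:\mathcal Z\to\mathcal Z$ by $\tilde{\mathcal A}(z)=\mathcal A(z,c^1(z),\dots,c^R(z))$ where $c^0(z)=0$ and $c^s(z)=\mathcal C^s(z,c^{s-1}(z))$. (A1) $\tilde{\mathcal A}$ has a fixed point $z^\infty\in\mathcal Z$, and there are $\lambda\in(0,1)$ and a norm $\|\cdot\|$ on $\mathbb R^p$ with $\|\cdot\|_2\le\|\cdot\|$ such that $\|\tilde{\mathcal A}(z)-z^\infty\|\le\lambda\|z-z^\infty\|$ for all $z\in\mathcal Z$. (A2) There is $L_A\ge0$ such that for every $s\in[R]$, $\|\mathcal A(z,c^1,\dots,c^s,\dots,c^R)-\mathcal A(z,c^1,\dots,\tilde c^s,\dots,c^R)\|\le L_A\|c^s-\tilde c^s\|_2$ for all $z\in\mathcal Z$ and all $c^1,\dots,c^R,\tilde c^s\in\mathbb R^{md}$. (A3) There are $L_C,L_Z\ge0$ such that for all $s\in[R]$: $\|\mathcal C^s(z,c)-\mathcal C^s(z,c')\|_2\le L_C\|c-c'\|_2$ for all $z\in\mathcal Z$, $c,c'\in\mathbb R^{md}$; and $\|\mathcal C^s(z,c)-\mathcal C^s(z',c)\|_2\le L_Z\|z-z'\|_2$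 for all $z,z'\in\mathcal Z$, $c\in\mathbb R^{md}$. Quantized algorithm (Q-M). Vectors in $\mathbb R^{md}$ are written $x=(x_1,\dots,x_m)$ with $x_i\in\mathbb R^d$ (agent $i$'s block). At iteration $k$ each agent $i$ uses a (possibly random) quantizer $\mathcal Q_i^k:\mathbb R^d\to\mathbb R^d$, and $\mathcal Q^k(x)=(\mathcal Q^k_1(x_1),\dots,\mathcal Q^k_m(x_m))$. Start with $z^0\in\mathcal Z$ and $\hat c^{-1,s}=0$ for $s\in[R]$. For $k=0,1,\dots$: set $\hat c^{k,0}=0$; for $s=1,\dots,R$: $c^{k,s}=\mathcal C^s(z^k,\hat c^{k,s-1})$ and $\hat c^{k,s}=\hat c^{k-1,s}+\mathcal Q^k(c^{k,s}-\hat c^{k-1,s})$; then $z^{k+1}=\mathcal A(z^k,\hat c^{k,1},\dots,\hat c^{k,R})$. The randomness of the quantizers is such that each application of a quantizer, conditionally on all previously generated random variables, satisfies the stated BC-rule inequality. BC-rule: a (possibly random) map $\mathcal Q:\mathbb R^d\to\mathbb R^d$ satisfies the biased compression rule with bias $\eta\ge0$ and compression rate $\omega\in[0,1)$ if $\sqrt{\mathbb E[\|\mathcal Q(x)-x\|_2^2]}\le\sqrt d\,\eta+\omega\|x\|_2$ for all $x\in\mathbb R^d$ (for deterministic $\mathcal Q$ the expectation is trivial). Threshold: $\bar\omega(\sigma)=\frac{\sigma}{R}\cdot\frac{\sigma-\lambda}{\sigma-\lambda+2L_AL_Z\big[R\max\{1,(2L_C)^{R-1}\}\big]^2}$. *)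

theory Defs
  imports "HOL-Probability.Probability"
begin

definition is_norm :: "('a::real_vector \<Rightarrow> real) \<Rightarrow> bool" where
  "is_norm N \<longleftrightarrow> (\<forall>x. N x = 0 \<longleftrightarrow> x = 0) \<and> (\<forall>x y. N (x + y) \<le> N x + N y)
     \<and> (\<forall>c x. N (c *\<^sub>R x) = \<bar>c\<bar> * N x)"

primrec cseq :: "(nat \<Rightarrow> 'z \<Rightarrow> 'v \<Rightarrow> 'v) \<Rightarrow> 'z \<Rightarrow> nat \<Rightarrow> ('v::zero)" where
  "cseq C z 0 = 0"
| "cseq C z (Suc s) = C (Suc s) z (cseq C z s)"

text \<open>The composite map A-tilde; the R-tuple (c^1,...,c^R) is a list of length R.\<close>
definition Atil :: "('z \<Rightarrow> ('v::zero) list \<Rightarrow> 'z) \<Rightarrow> (nat \<Rightarrow> 'z \<Rightarrow> 'v \<Rightarrow> 'v) \<Rightarrow> nat \<Rightarrow> 'z \<Rightarrow> 'z::type"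
  where "Atil A C R z = A z (map (cseq C z) [1..<Suc R])"

text \<open>Inner loop of (Q-M) at one iteration: qm_hat C Qk z prev s = hat c^{k,s}, where
  z = z^k, prev s' = hat c^{k-1,s'} and Qk s is the (full-vector) quantizer used at step s.\<close>
primrec qm_hat :: "(nat \<Rightarrow> 'z \<Rightarrow> 'v \<Rightarrow> 'v) \<Rightarrow> (nat \<Rightarrow> 'v \<Rightarrow> 'v) \<Rightarrow> 'z \<Rightarrow> (nat \<Rightarrow> 'v) \<Rightarrow> nat
    \<Rightarrow> ('v::ab_group_add)" where
  "qm_hat C Qk z prev 0 = 0"
| "qm_hat C Qk z prev (Suc s) =
     prev (Suc s) + Qk (Suc s) (C (Suc s) z (qm_hat C Qk z prev s) - prev (Suc s))"

text \<open>State of (Q-M): qm_state ... k = (z^k, (s \<mapsto> hat c^{k-1,s})), with hat c^{-1,s} = 0.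
  Q k s is the full-vector quantizer used at iteration k, inner step s.\<close>
primrec qm_state :: "('z \<Rightarrow> 'v list \<Rightarrow> 'z) \<Rightarrow> (nat \<Rightarrow> 'z \<Rightarrow> 'v \<Rightarrow> 'v) \<Rightarrow> nat
    \<Rightarrow> (nat \<Rightarrow> nat \<Rightarrow> 'v \<Rightarrow> 'v) \<Rightarrow> 'z \<Rightarrow> nat \<Rightarrow> 'z \<times> (nat \<Rightarrow> ('v::ab_group_add))" where
  "qm_state A C R Q z0 0 = (z0, (\<lambda>s. 0))"
| "qm_state A C R Q z0 (Suc k) =
     (let (z, prev) = qm_state A C R Q z0 k; h = qm_hat C (Q k) z prev
      in (A z (map h [1..<Suc R]), h))"

definition qm_z where "qm_z A C R Q z0 k = fst (qm_state A C R Q z0 k)"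

text \<open>The quantizer input at iteration k, step s (s \<ge> 1): c^{k,s} - hat c^{k-1,s}.\<close>
definition qm_input where
  "qm_input A C R Q z0 k s =
     (let (z, prev) = qm_state A C R Q z0 k
      in C s z (qm_hat C (Q k) z prev (s - 1)) - prev s)"

definition blockQ :: "('m \<Rightarrow> real^'d \<Rightarrow> real^'d) \<Rightarrow> real^'d^'m \<Rightarrow> real^'d^'m" where
  "blockQ Qi x = (\<chi> i. Qi i (x $ i))"

definition psi :: "nat \<Rightarrow> real \<Rightarrow> real" where
  "psi R LC = max 1 ((2 * LC) ^ (R - 1))"

definition omega_bar :: "nat \<Rightarrow> real \<Rightarrow> real \<Rightarrow> real \<Rightarrow> real \<Rightarrow> real \<Rightarrow> real" where
  "omega_bar R lam LA LC LZ \<sigma> =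
     (\<sigma> / real R) * ((\<sigma> - lam) / (\<sigma> - lam + 2 * LA * LZ * (real R * psi R LC)^2))"

end

(* Let u_k = nrm (z^k - z^inf), let x_{k,s} = |c^{k,s} - hat c^{k-1,s}| be the size of a
   quantizer input and e_{k,s} the corresponding quantization error.  Pathwise, the contraction
   (A1) and the Lipschitz bounds (A2), (A3) give
     u_{k+1} <= lam u_k + L_A sum_{s} sum_{t<=s} L_C^{s-t} e_{k,t},
     x_{k+1,s+1} <= L_Z (u_{k+1} + u_k) + e_{k,s+1} + L_C (x_{k+1,s} + e_{k+1,s}),
   while the BC-rule bounds the L2-norm of e_{k,s} by eta^0 sigma^k sqrt(md) plus omega times the
   L2-norm of x_{k,s}.  An induction over k, with an inner induction over s, shows that the
   L2-norms of u_k and x_{k,s} stay below V_0 sigma^k and beta^{s-1} s W sigma^k, where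
   beta = max{1, 2 L_C}; the condition omega < bar omega(sigma) is exactly what makes these
   bounds reproduce themselves. *)

theory Submission
  imports Defs
begin

section \<open>Random variables with bounded second moment\<close>

definition L2_bounded :: "'a measure \<Rightarrow> ('a \<Rightarrow> real) \<Rightarrow> real \<Rightarrow> bool" where
  "L2_bounded M f b \<longleftrightarrow> f \<in> borel_measurable M \<and> (\<forall>\<omega>. 0 \<le> f \<omega>) \<and> 0 \<le> b \<and>
     (\<integral>\<^sup>+ \<omega>. ennreal ((f \<omega>)\<^sup>2) \<partial>M) \<le> ennreal (b\<^sup>2)"

lemma L2_bounded_mono_bound: "L2_bounded M f b \<Longrightarrow> b \<le> b' \<Longrightarrow> L2_bounded M f b'"
  unfolding L2_bounded_def by (meson dual_order.trans ennreal_leI order.trans power_mono)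

lemma L2_bounded_dominated:
  assumes "g \<in> borel_measurable M" "\<And>\<omega>. 0 \<le> g \<omega>" "\<And>\<omega>. g \<omega> \<le> f \<omega>" "L2_bounded M f b"
  shows "L2_bounded M g b"
proof -
  have "(\<integral>\<^sup>+ \<omega>. ennreal ((g \<omega>)\<^sup>2) \<partial>M) \<le> (\<integral>\<^sup>+ \<omega>. ennreal ((f \<omega>)\<^sup>2) \<partial>M)"
    by (intro nn_integral_mono ennreal_leI power_mono) (use assms in auto)
  then show ?thesis using assms unfolding L2_bounded_def by auto
qed

lemma L2_bounded_0_AE_zero:
  assumes "L2_bounded M f 0"
  shows "AE \<omega> in M. f \<omega> = 0"
proof -
  have "(\<integral>\<^sup>+ \<omega>. ennreal ((f \<omega>)\<^sup>2) \<partial>M) = 0" using assms unfolding L2_bounded_def by simp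
  then have "AE \<omega> in M. ennreal ((f \<omega>)\<^sup>2) = 0"
    using assms unfolding L2_bounded_def by (subst (asm) nn_integral_0_iff_AE) auto
  then show ?thesis by eventually_elim simp
qed

lemma L2_bounded_add_0:
  assumes f: "L2_bounded M f 0" and g: "L2_bounded M g c"
  shows "L2_bounded M (\<lambda>\<omega>. f \<omega> + g \<omega>) c"
proof -
  have "AE \<omega> in M. ennreal ((f \<omega> + g \<omega>)\<^sup>2) = ennreal ((g \<omega>)\<^sup>2)"
    using L2_bounded_0_AE_zero[OF f] by eventually_elim simp
  then have "(\<integral>\<^sup>+ \<omega>. ennreal ((f \<omega> + g \<omega>)\<^sup>2) \<partial>M) = (\<integral>\<^sup>+ \<omega>. ennreal ((g \<omega>)\<^sup>2) \<partial>M)"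
    by (rule nn_integral_cong_AE)
  then show ?thesis using f g unfolding L2_bounded_def by auto
qed

text \<open>Minkowski's inequality, via the pointwise bound
  \<open>(f + g)\<^sup>2 \<le> (1 + c/b) f\<^sup>2 + (1 + b/c) g\<^sup>2\<close>.\<close>
lemma L2_bounded_add:
  assumes f: "L2_bounded M f b" and g: "L2_bounded M g c"
  shows "L2_bounded M (\<lambda>\<omega>. f \<omega> + g \<omega>) (b + c)"
proof -
  consider "b = 0" | "c = 0" | "b > 0" "c > 0"
    using f g unfolding L2_bounded_def by fastforce
  then show ?thesis
  proof cases
    case 1 then show ?thesis using L2_bounded_add_0 f g by simp
  next
    case 2 then show ?thesis using L2_bounded_add_0[of M g f b] f g by (simp add: add.commute)
  next
    case 3
    define p where "p = 1 + c / b"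
    define q where "q = 1 + b / c"
    have pq: "p \<ge> 0" "q \<ge> 0" "p * b\<^sup>2 + q * c\<^sup>2 = (b + c)\<^sup>2"
      using 3 unfolding p_def q_def by (auto simp: field_simps power2_eq_square)
    have fm: "f \<in> borel_measurable M" and gm: "g \<in> borel_measurable M"
      using f g unfolding L2_bounded_def by auto
    have pointwise: "(f \<omega> + g \<omega>)\<^sup>2 \<le> p * (f \<omega>)\<^sup>2 + q * (g \<omega>)\<^sup>2" for \<omega>
    proof -
      have "0 \<le> (c * f \<omega> - b * g \<omega>)\<^sup>2" by simp
      then have "2 * (f \<omega> * g \<omega>) \<le> (c / b) * (f \<omega>)\<^sup>2 + (b / c) * (g \<omega>)\<^sup>2"
        using 3 by (simp add: field_simps power2_eq_square)
      then show ?thesis unfolding p_def q_def by (simp add: power2_eq_square algebra_simps)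
    qed
    have "(\<integral>\<^sup>+ \<omega>. ennreal ((f \<omega> + g \<omega>)\<^sup>2) \<partial>M)
        \<le> (\<integral>\<^sup>+ \<omega>. ennreal p * ennreal ((f \<omega>)\<^sup>2) + ennreal q * ennreal ((g \<omega>)\<^sup>2) \<partial>M)"
      by (intro nn_integral_mono)
        (use pointwise pq in \<open>simp add: ennreal_mult[symmetric] ennreal_plus[symmetric] del: ennreal_plus\<close>)
    also have "\<dots> = ennreal p * (\<integral>\<^sup>+ \<omega>. ennreal ((f \<omega>)\<^sup>2) \<partial>M) + ennreal q * (\<integral>\<^sup>+ \<omega>. ennreal ((g \<omega>)\<^sup>2) \<partial>M)"
      using fm gm by (subst nn_integral_add) (auto simp: nn_integral_cmult)
    also have "\<dots> \<le> ennreal p * ennreal (b\<^sup>2) + ennreal q * ennreal (c\<^sup>2)"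
      using f g unfolding L2_bounded_def by (intro add_mono mult_left_mono) auto
    also have "\<dots> = ennreal ((b + c)\<^sup>2)"
      using pq by (simp add: ennreal_mult[symmetric] ennreal_plus[symmetric] del: ennreal_plus)
    finally show ?thesis using f g unfolding L2_bounded_def by auto
  qed
qed

lemma L2_bounded_cmult:
  assumes "L2_bounded M f b" "0 \<le> a"
  shows "L2_bounded M (\<lambda>\<omega>. a * f \<omega>) (a * b)"
proof -
  have fm: "f \<in> borel_measurable M" using assms unfolding L2_bounded_def by auto
  have "(\<integral>\<^sup>+ \<omega>. ennreal ((a * f \<omega>)\<^sup>2) \<partial>M) = ennreal (a\<^sup>2) * (\<integral>\<^sup>+ \<omega>. ennreal ((f \<omega>)\<^sup>2) \<partial>M)"
    using fm by (subst nn_integral_cmult[symmetric]) (auto simp: ennreal_mult[symmetric] power_mult_distrib)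
  also have "\<dots> \<le> ennreal (a\<^sup>2) * ennreal (b\<^sup>2)"
    using assms unfolding L2_bounded_def by (intro mult_left_mono) auto
  also have "\<dots> = ennreal ((a * b)\<^sup>2)" by (simp add: ennreal_mult[symmetric] power_mult_distrib)
  finally show ?thesis using assms unfolding L2_bounded_def by auto
qed

lemma (in prob_space) L2_bounded_const: "0 \<le> c \<Longrightarrow> L2_bounded M (\<lambda>\<omega>. c) c"
  unfolding L2_bounded_def by (simp add: emeasure_space_1)

lemma (in prob_space) L2_bounded_sum:
  assumes "finite I" "\<And>i. i \<in> I \<Longrightarrow> L2_bounded M (f i) (b i)"
  shows "L2_bounded M (\<lambda>\<omega>. \<Sum>i\<in>I. f i \<omega>) (\<Sum>i\<in>I. b i)"
  using assms by (induction I rule: finite_induct) (auto intro: L2_bounded_add L2_bounded_const[of 0, simplified])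

lemma is_norm_triangle: "is_norm N \<Longrightarrow> N (x + y) \<le> N x + N y"
  unfolding is_norm_def by blast

lemma is_norm_scaleR: "is_norm N \<Longrightarrow> N (c *\<^sub>R x) = \<bar>c\<bar> * N x"
  unfolding is_norm_def by blast

lemma is_norm_zero: "is_norm N \<Longrightarrow> N 0 = 0"
  unfolding is_norm_def by blast

lemma is_norm_minus: "is_norm N \<Longrightarrow> N (- x) = N x"
  using is_norm_scaleR[of N "-1" x] by simp

lemma is_norm_nonneg: "is_norm N \<Longrightarrow> 0 \<le> N x"
  using is_norm_triangle[of N x "- x"] is_norm_zero[of N] is_norm_minus[of N x] by simp

lemma is_norm_diff_triangle: "is_norm N \<Longrightarrow> N (a - c) \<le> N (a - b) + N (b - c)"
  using is_norm_triangle[of N "a - b" "b - c"] by simp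

lemma is_norm_sum_le:
  assumes "is_norm N" "finite S"
  shows "N (\<Sum>b\<in>S. f b) \<le> (\<Sum>b\<in>S. N (f b))"
  using assms(2)
proof (induction S rule: finite_induct)
  case (insert b S)
  then show ?case using is_norm_triangle[OF assms(1), of "f b" "sum f S"] by simp
qed (simp add: is_norm_zero[OF assms(1)])

lemma is_norm_le_norm:
  fixes N :: "'a::euclidean_space \<Rightarrow> real"
  assumes "is_norm N"
  shows "N x \<le> (\<Sum>b\<in>Basis. N b) * norm x"
proof -
  have "N x = N (\<Sum>b\<in>Basis. (x \<bullet> b) *\<^sub>R b)" by (simp add: euclidean_representation)
  also have "\<dots> \<le> (\<Sum>b\<in>Basis. \<bar>x \<bullet> b\<bar> * N b)"
    using is_norm_sum_le[OF assms, of Basis "\<lambda>b. (x \<bullet> b) *\<^sub>R b"] by (simp add: is_norm_scaleR[OF assms])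
  also have "\<dots> \<le> (\<Sum>b\<in>Basis. norm x * N b)"
    by (intro sum_mono mult_right_mono) (auto simp: Basis_le_norm is_norm_nonneg[OF assms])
  finally show ?thesis by (simp add: sum_distrib_left mult.commute)
qed

lemma is_norm_lipschitz:
  fixes N :: "'a::euclidean_space \<Rightarrow> real"
  assumes "is_norm N"
  shows "(\<Sum>b\<in>Basis. N b)-lipschitz_on UNIV N"
proof (rule lipschitz_onI)
  fix x y :: 'a
  have "\<bar>N x - N y\<bar> \<le> N (x - y)"
    using is_norm_diff_triangle[OF assms, of x 0 y] is_norm_diff_triangle[OF assms, of y 0 x]
      is_norm_minus[OF assms, of "x - y"] by simp
  then show "dist (N x) (N y) \<le> (\<Sum>b\<in>Basis. N b) * dist x y"
    using is_norm_le_norm[OF assms, of "x - y"] by (simp add: dist_real_def dist_norm)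
qed (simp add: sum_nonneg is_norm_nonneg[OF assms])

lemma borel_measurable_is_norm:
  fixes N :: "'a::euclidean_space \<Rightarrow> real"
  shows "is_norm N \<Longrightarrow> N \<in> borel_measurable borel"
  by (intro borel_measurable_continuous_onI lipschitz_on_continuous_on[OF is_norm_lipschitz])

lemma norm_vec_square: "(norm (x :: 'a::real_normed_vector ^'n))\<^sup>2 = (\<Sum>i\<in>UNIV. (norm (x $ i))\<^sup>2)"
  by (simp add: norm_vec_def L2_set_def sum_nonneg)

lemma borel_measurable_norm_vec:
  fixes X :: "'a \<Rightarrow> 'b::real_normed_vector ^'n"
  assumes "\<And>i. (\<lambda>\<omega>. norm (X \<omega> $ i)) \<in> borel_measurable M"
  shows "(\<lambda>\<omega>. norm (X \<omega>)) \<in> borel_measurable M"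
  unfolding norm_vec_def L2_set_def using assms by measurable

section \<open>The iterates of (Q-M)\<close>

text \<open>In the notation of (Q-M), \<open>qm_hatc \<dots> k s\<close> is hat c^{k,s}, \<open>qm_prev \<dots> k s\<close> is
  hat c^{k-1,s}, and \<open>qm_err \<dots> k s\<close> is the quantization error Q(x) - x at the input
  x = c^{k,s} - hat c^{k-1,s}.\<close>

definition qm_prev where "qm_prev A C R Q z0 k = snd (qm_state A C R Q z0 k)"

definition qm_hatc where
  "qm_hatc A C R Q z0 k = qm_hat C (Q k) (qm_z A C R Q z0 k) (qm_prev A C R Q z0 k)"

definition qm_err where
  "qm_err A C R Q z0 k s = Q k s (qm_input A C R Q z0 k s) - qm_input A C R Q z0 k s"

lemma qm_z_0: "qm_z A C R Q z0 0 = z0"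
  by (simp add: qm_z_def)

lemma qm_z_Suc: "qm_z A C R Q z0 (Suc k) = A (qm_z A C R Q z0 k) (map (qm_hatc A C R Q z0 k) [1..<Suc R])"
  by (simp add: qm_z_def qm_hatc_def qm_prev_def case_prod_beta Let_def)

lemma qm_prev_0: "qm_prev A C R Q z0 0 = (\<lambda>s. 0)"
  by (simp add: qm_prev_def)

lemma qm_prev_Suc: "qm_prev A C R Q z0 (Suc k) = qm_hatc A C R Q z0 k"
  by (simp add: qm_prev_def qm_z_def qm_hatc_def case_prod_beta Let_def)

lemma qm_input_eq:
  "qm_input A C R Q z0 k s =
     C s (qm_z A C R Q z0 k) (qm_hatc A C R Q z0 k (s - 1)) - qm_prev A C R Q z0 k s"
  by (simp add: qm_input_def qm_z_def qm_hatc_def qm_prev_def case_prod_beta)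

lemma qm_hatc_0: "qm_hatc A C R Q z0 k 0 = 0"
  by (simp add: qm_hatc_def)

lemma qm_prev_at_0: "qm_prev A C R Q z0 k 0 = 0"
  by (cases k) (simp_all add: qm_prev_0 qm_prev_Suc qm_hatc_0)

lemma qm_hatc_minus_prev:
  "qm_hatc A C R Q z0 k (Suc s) - qm_prev A C R Q z0 k (Suc s) =
     qm_input A C R Q z0 k (Suc s) + qm_err A C R Q z0 k (Suc s)"
  by (simp add: qm_hatc_def qm_err_def qm_input_eq[unfolded qm_hatc_def])

lemma qm_hatc_Suc:
  "qm_hatc A C R Q z0 k (Suc s) =
     C (Suc s) (qm_z A C R Q z0 k) (qm_hatc A C R Q z0 k s) + qm_err A C R Q z0 k (Suc s)"
  using qm_hatc_minus_prev[of A C R Q z0 k s] by (simp add: qm_input_eq algebra_simps)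

section \<open>Pathwise error recursion\<close>

locale qm_scheme =
  fixes Z :: "'z::real_normed_vector set"
    and C :: "nat \<Rightarrow> 'z \<Rightarrow> 'v::real_normed_vector \<Rightarrow> 'v"
    and A :: "'z \<Rightarrow> 'v list \<Rightarrow> 'z"
    and R :: nat
    and zinf :: 'z
    and nrm :: "'z \<Rightarrow> real"
    and lam LA LC LZ :: real
  assumes A_maps: "\<forall>z\<in>Z. \<forall>cs. length cs = R \<longrightarrow> A z cs \<in> Z"
    and nrm: "is_norm nrm"
    and contraction: "\<forall>z\<in>Z. nrm (Atil A C R z - zinf) \<le> lam * nrm (z - zinf)"
    and A_lipschitz: "\<forall>z\<in>Z. \<forall>cs s c'. length cs = R \<longrightarrow> s \<in> {1..R} \<longrightarrow>
          nrm (A z cs - A z (cs[s - 1 := c'])) \<le> LA * norm (cs ! (s - 1) - c')"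
    and LA_nonneg: "0 \<le> LA"
    and LC_nonneg: "0 \<le> LC"
    and C_lipschitz: "\<forall>s\<in>{1..R}. \<forall>z\<in>Z. \<forall>c c'. norm (C s z c - C s z c') \<le> LC * norm (c - c')"
    and C_lipschitz_z: "\<forall>s\<in>{1..R}. \<forall>z\<in>Z. \<forall>z'\<in>Z. \<forall>c. norm (C s z c - C s z' c) \<le> LZ * norm (z - z')"
begin

lemma qm_z_in: "z0 \<in> Z \<Longrightarrow> qm_z A C R Q z0 k \<in> Z"
  by (induction k) (use A_maps in \<open>auto simp: qm_z_0 qm_z_Suc\<close>)

text \<open>Change the arguments of \<open>A\<close> one coordinate at a time.\<close>
lemma A_lipschitz_sum:
  assumes z: "z \<in> Z" and len: "length cs = R" "length cs' = R"
  shows "nrm (A z cs - A z cs') \<le> LA * (\<Sum>i<R. norm (cs ! i - cs' ! i))"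
proof -
  define mix where "mix j = map (\<lambda>i. if i < j then cs' ! i else cs ! i) [0..<R]" for j
  have len_mix: "length (mix j) = R" for j unfolding mix_def by simp
  have "nrm (A z cs - A z (mix j)) \<le> LA * (\<Sum>i<j. norm (cs ! i - cs' ! i))" if "j \<le> R" for j
    using that
  proof (induction j)
    case 0
    have "mix 0 = cs" unfolding mix_def using len by (intro nth_equalityI) auto
    then show ?case by (simp add: is_norm_zero[OF nrm])
  next
    case (Suc j)
    have "mix (Suc j) = (mix j)[j := cs' ! j]"
      unfolding mix_def using Suc.prems by (intro nth_equalityI) (auto simp: nth_list_update)
    moreover have "mix j ! j = cs ! j" unfolding mix_def using Suc.prems by simp
    ultimately have "nrm (A z (mix j) - A z (mix (Suc j))) \<le> LA * norm (cs ! j - cs' ! j)"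
      using A_lipschitz z len_mix Suc.prems by (metis atLeastAtMost_iff diff_Suc_1 le_add1 plus_1_eq_Suc)
    then show ?case
      using Suc is_norm_diff_triangle[OF nrm, of "A z cs" "A z (mix (Suc j))" "A z (mix j)"]
      by (simp add: distrib_left)
  qed
  moreover have "mix R = cs'" unfolding mix_def using len by (intro nth_equalityI) auto
  ultimately show ?thesis by (metis order_refl)
qed

lemma qm_hatc_dist_cseq:
  assumes z: "qm_z A C R Q z0 k \<in> Z" and "s \<le> R"
  shows "norm (qm_hatc A C R Q z0 k s - cseq C (qm_z A C R Q z0 k) s)
     \<le> (\<Sum>t\<in>{1..s}. LC ^ (s - t) * norm (qm_err A C R Q z0 k t))"
  using \<open>s \<le> R\<close>
proof (induction s)
  case 0 then show ?case by (simp add: qm_hatc_0)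
next
  case (Suc s)
  let ?z = "qm_z A C R Q z0 k"
  let ?h = "qm_hatc A C R Q z0 k" and ?c = "cseq C ?z" and ?e = "qm_err A C R Q z0 k"
  have "?h (Suc s) - ?c (Suc s) = (C (Suc s) ?z (?h s) - C (Suc s) ?z (?c s)) + ?e (Suc s)"
    by (simp add: qm_hatc_Suc)
  then have "norm (?h (Suc s) - ?c (Suc s))
      \<le> norm (C (Suc s) ?z (?h s) - C (Suc s) ?z (?c s)) + norm (?e (Suc s))"
    by (metis norm_triangle_ineq)
  also have "\<dots> \<le> LC * norm (?h s - ?c s) + norm (?e (Suc s))"
    using C_lipschitz z Suc.prems by auto
  also have "\<dots> \<le> LC * (\<Sum>t\<in>{1..s}. LC ^ (s - t) * norm (?e t)) + norm (?e (Suc s))"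
    using Suc LC_nonneg by (simp add: mult_left_mono)
  also have "\<dots> = (\<Sum>t\<in>{1..Suc s}. LC ^ (Suc s - t) * norm (?e t))"
    by (simp add: sum_distrib_left Suc_diff_le mult.assoc)
  finally show ?case .
qed

lemma qm_z_Suc_dist_le:
  assumes z: "qm_z A C R Q z0 k \<in> Z"
  shows "nrm (qm_z A C R Q z0 (Suc k) - zinf) \<le> lam * nrm (qm_z A C R Q z0 k - zinf)
     + LA * (\<Sum>s\<in>{1..R}. \<Sum>t\<in>{1..s}. LC ^ (s - t) * norm (qm_err A C R Q z0 k t))"
proof -
  let ?z = "qm_z A C R Q z0 k" and ?h = "qm_hatc A C R Q z0 k"
  let ?cs = "map ?h [1..<Suc R]" and ?cs' = "map (cseq C ?z) [1..<Suc R]"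
  have "nrm (A ?z ?cs - A ?z ?cs') \<le> LA * (\<Sum>i<R. norm (?cs ! i - ?cs' ! i))"
    by (rule A_lipschitz_sum[OF z]) auto
  also have "(\<Sum>i<R. norm (?cs ! i - ?cs' ! i)) = (\<Sum>i<R. norm (?h (Suc i) - cseq C ?z (Suc i)))"
    by (intro sum.cong refl) (simp del: upt_Suc)
  also have "\<dots> = (\<Sum>s\<in>{1..R}. norm (?h s - cseq C ?z s))"
    by (rule sum_bounds_lt_plus1)
  also have "\<dots> \<le> (\<Sum>s\<in>{1..R}. \<Sum>t\<in>{1..s}. LC ^ (s - t) * norm (qm_err A C R Q z0 k t))"
    by (intro sum_mono qm_hatc_dist_cseq[OF z]) auto
  finally have "nrm (A ?z ?cs - A ?z ?cs')
      \<le> LA * (\<Sum>s\<in>{1..R}. \<Sum>t\<in>{1..s}. LC ^ (s - t) * norm (qm_err A C R Q z0 k t))"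
    using LA_nonneg by (meson mult_left_mono order_trans)
  moreover have "nrm (A ?z ?cs' - zinf) \<le> lam * nrm (?z - zinf)"
    using contraction z unfolding Atil_def by auto
  ultimately show ?thesis
    using is_norm_diff_triangle[OF nrm, of "A ?z ?cs" zinf "A ?z ?cs'"] by (simp add: qm_z_Suc)
qed

lemma qm_input_Suc_norm_le:
  assumes z: "qm_z A C R Q z0 (Suc k) \<in> Z" "qm_z A C R Q z0 k \<in> Z" and s: "s \<in> {1..R}"
  shows "norm (qm_input A C R Q z0 (Suc k) s)
     \<le> LZ * norm (qm_z A C R Q z0 (Suc k) - qm_z A C R Q z0 k)
       + LC * norm (qm_hatc A C R Q z0 (Suc k) (s - 1) - qm_prev A C R Q z0 (Suc k) (s - 1))
       + norm (qm_err A C R Q z0 k s)"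
proof -
  obtain s' where s': "s = Suc s'" using s by (cases s) auto
  let ?z' = "qm_z A C R Q z0 (Suc k)" and ?z = "qm_z A C R Q z0 k"
  let ?h' = "qm_hatc A C R Q z0 (Suc k) s'" and ?h = "qm_hatc A C R Q z0 k s'"
  let ?e = "qm_err A C R Q z0 k s"
  have split: "qm_input A C R Q z0 (Suc k) s = (C s ?z' ?h' - C s ?z ?h') + (C s ?z ?h' - C s ?z ?h) - ?e"
    by (simp add: qm_input_eq qm_prev_Suc s' qm_hatc_Suc)
  have "norm (qm_input A C R Q z0 (Suc k) s)
      \<le> norm (C s ?z' ?h' - C s ?z ?h') + norm (C s ?z ?h' - C s ?z ?h) + norm ?e"
    unfolding split using norm_triangle_ineq4[of "(C s ?z' ?h' - C s ?z ?h') + (C s ?z ?h' - C s ?z ?h)" ?e]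
      norm_triangle_ineq[of "C s ?z' ?h' - C s ?z ?h'" "C s ?z ?h' - C s ?z ?h"] by linarith
  also have "\<dots> \<le> LZ * norm (?z' - ?z) + LC * norm (?h' - ?h) + norm ?e"
    using C_lipschitz C_lipschitz_z z s by (intro add_mono) auto
  finally show ?thesis by (simp add: s' qm_prev_Suc)
qed

lemma qm_input_0_norm_le:
  assumes z0: "z0 \<in> Z" and s: "s \<in> {1..R}"
  shows "norm (qm_input A C R Q z0 0 s)
     \<le> norm (C s z0 0) + LC * norm (qm_hatc A C R Q z0 0 (s - 1) - qm_prev A C R Q z0 0 (s - 1))"
proof -
  let ?h = "qm_hatc A C R Q z0 0 (s - 1)"
  have "norm (qm_input A C R Q z0 0 s) \<le> norm (C s z0 0) + norm (C s z0 ?h - C s z0 0)"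
    using norm_triangle_ineq[of "C s z0 0" "C s z0 ?h - C s z0 0"] by (simp add: qm_input_eq qm_z_0 qm_prev_0)
  also have "\<dots> \<le> norm (C s z0 0) + LC * norm ?h"
    using C_lipschitz z0 s by (metis add_left_mono diff_zero)
  finally show ?thesis by (simp add: qm_prev_0)
qed

end

section \<open>Second moments of the quantization errors\<close>

lemma (in prob_space) nn_integral_le_of_cond_exp_le:
  assumes sub: "subalgebra M F" and f: "f \<in> borel_measurable M"
    and le: "AE \<omega> in M. nn_cond_exp M F f \<omega> \<le> g \<omega>"
  shows "(\<integral>\<^sup>+ \<omega>. f \<omega> \<partial>M) \<le> (\<integral>\<^sup>+ \<omega>. g \<omega> \<partial>M)"
proof -
  interpret finite_measure_subalgebra M F
    by (simp add: finite_measure_subalgebra_def finite_measure_subalgebra_axioms_def sub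
        finite_measure_axioms)
  have "(\<integral>\<^sup>+ \<omega>. f \<omega> \<partial>M) = (\<integral>\<^sup>+ \<omega>. 1 * nn_cond_exp M F f \<omega> \<partial>M)"
    using nn_cond_exp_intg[of "\<lambda>_. 1" f] f by simp
  also have "\<dots> \<le> (\<integral>\<^sup>+ \<omega>. g \<omega> \<partial>M)"
    using le by (intro nn_integral_mono_AE) auto
  finally show ?thesis .
qed

text \<open>The BC-rule holds blockwise in conditional mean square; integrating it and summing over the
  \<open>m\<close> agents bounds the error by the \<open>L\<^sup>2\<close>-norm of the vector \<open>(\<eta>\<surd>d + w \<parallel>X\<^sub>i\<parallel>)\<^sub>i\<close>,
  which Minkowski's inequality splits into \<open>\<eta>\<surd>(md)\<close> and \<open>w \<parallel>X\<parallel>\<close>.\<close>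
lemma (in prob_space) blockQ_error_L2_bounded:
  fixes Qi :: "'m::finite \<Rightarrow> 'a \<Rightarrow> real^'d \<Rightarrow> real^'d" and X :: "'a \<Rightarrow> real^'d^'m"
  assumes sub: "subalgebra M F"
    and X_meas: "\<And>i. (\<lambda>\<omega>. X \<omega> $ i) \<in> borel_measurable F"
    and Q_meas: "\<And>i X. X \<in> borel_measurable F \<Longrightarrow> (\<lambda>\<omega>. Qi i \<omega> (X \<omega>)) \<in> borel_measurable M"
    and BC: "\<And>i X. X \<in> borel_measurable F \<Longrightarrow>
        AE \<omega> in M. nn_cond_exp M F (\<lambda>\<omega>'. ennreal ((norm (Qi i \<omega>' (X \<omega>') - X \<omega>'))\<^sup>2)) \<omega>
          \<le> ennreal ((sqrt (real CARD('d)) * \<eta> + w * norm (X \<omega>))\<^sup>2)"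
    and X_bound: "L2_bounded M (\<lambda>\<omega>. norm (X \<omega>)) b" and \<eta>: "0 \<le> \<eta>" and w: "0 \<le> w"
  shows "L2_bounded M (\<lambda>\<omega>. norm (blockQ (\<lambda>i. Qi i \<omega>) (X \<omega>) - X \<omega>))
           (sqrt (real (CARD('m) * CARD('d))) * \<eta> + w * b)"
proof -
  define a where "a = sqrt (real CARD('d)) * \<eta>"
  have a: "0 \<le> a" unfolding a_def using \<eta> by simp
  define err where "err i \<omega> = norm (Qi i \<omega> (X \<omega> $ i) - X \<omega> $ i)" for i \<omega>
  define g where "g \<omega> = norm (\<chi> i. a + w * norm (X \<omega> $ i))" for \<omega>
  have X_M: "(\<lambda>\<omega>. X \<omega> $ i) \<in> borel_measurable M" for i
    using measurable_from_subalg[OF sub X_meas] .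
  have Q_M: "(\<lambda>\<omega>. Qi i \<omega> (X \<omega> $ i)) \<in> borel_measurable M" for i
    using Q_meas[OF X_meas] .
  have err_M: "err i \<in> borel_measurable M" for i
    unfolding err_def using Q_M[of i] X_M[of i] by measurable
  have "(\<lambda>\<omega>. norm (a + w * norm (X \<omega> $ i))) \<in> borel_measurable M" for i
    using X_M[of i] by measurable
  then have g_M: "g \<in> borel_measurable M"
    unfolding g_def by (intro borel_measurable_norm_vec) (simp only: vec_lambda_beta)
  have err_vec: "norm (blockQ (\<lambda>i. Qi i \<omega>) (X \<omega>) - X \<omega>) = norm (\<chi> i. err i \<omega>)" for \<omega>
    by (simp add: norm_vec_def blockQ_def err_def)
  have "(\<integral>\<^sup>+ \<omega>. ennreal ((norm (blockQ (\<lambda>i. Qi i \<omega>) (X \<omega>) - X \<omega>))\<^sup>2) \<partial>M)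
      = (\<Sum>i\<in>UNIV. \<integral>\<^sup>+ \<omega>. ennreal ((err i \<omega>)\<^sup>2) \<partial>M)"
    unfolding err_vec norm_vec_square using err_M
    by (simp add: sum_nonneg nn_integral_sum[symmetric] del: vec_lambda_beta) simp
  also have "\<dots> \<le> (\<Sum>i\<in>UNIV. \<integral>\<^sup>+ \<omega>. ennreal ((a + w * norm (X \<omega> $ i))\<^sup>2) \<partial>M)"
    using BC X_meas err_M unfolding err_def a_def
    by (intro sum_mono nn_integral_le_of_cond_exp_le[OF sub]) auto
  also have "\<dots> = (\<integral>\<^sup>+ \<omega>. ennreal ((g \<omega>)\<^sup>2) \<partial>M)"
    unfolding g_def norm_vec_square using X_M by (simp add: sum_nonneg nn_integral_sum[symmetric])
  finally have err_le_g: "(\<integral>\<^sup>+ \<omega>. ennreal ((norm (blockQ (\<lambda>i. Qi i \<omega>) (X \<omega>) - X \<omega>))\<^sup>2) \<partial>M)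
      \<le> (\<integral>\<^sup>+ \<omega>. ennreal ((g \<omega>)\<^sup>2) \<partial>M)" .
  have g_le: "g \<omega> \<le> sqrt (real (CARD('m) * CARD('d))) * \<eta> + w * norm (X \<omega>)" for \<omega>
  proof -
    have "(\<chi> i. a + w * norm (X \<omega> $ i)) = (\<chi> i. a) + w *\<^sub>R (\<chi> i. norm (X \<omega> $ i))"
      by (simp add: vec_eq_iff)
    then have "g \<omega> \<le> norm (\<chi> i::'m. a) + norm (w *\<^sub>R (\<chi> i. norm (X \<omega> $ i)))"
      unfolding g_def by (metis norm_triangle_ineq)
    also have "norm (\<chi> i::'m. a) = sqrt (real (CARD('m) * CARD('d))) * \<eta>"
      using a by (simp add: norm_vec_def L2_set_def a_def real_sqrt_mult)
    also have "norm (w *\<^sub>R (\<chi> i. norm (X \<omega> $ i))) = w * norm (X \<omega>)"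
      unfolding norm_scaleR using w by (simp add: norm_vec_def L2_set_def)
    finally show ?thesis .
  qed
  have "L2_bounded M g (sqrt (real (CARD('m) * CARD('d))) * \<eta> + w * b)"
    using g_M g_le \<eta> w X_bound
    by (intro L2_bounded_dominated[OF _ _ _ L2_bounded_add[OF L2_bounded_const L2_bounded_cmult]])
      (auto simp: g_def)
  moreover have "(\<lambda>\<omega>. norm (\<chi> i. err i \<omega>)) \<in> borel_measurable M"
    using err_M by (intro borel_measurable_norm_vec) simp
  ultimately show ?thesis using err_le_g
    unfolding L2_bounded_def err_vec by (auto intro: order_trans)
qed

text \<open>The bound grows by the factor \<open>\<beta>\<close> per step because \<open>LC * (1 + w) \<le> \<beta>\<close>.\<close>
lemma (in prob_space) L2_bounded_chain:
  fixes x d e g :: "nat \<Rightarrow> 'a \<Rightarrow> real"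
  assumes x_meas: "\<And>s. s \<in> {1..R} \<Longrightarrow> x s \<in> borel_measurable M"
    and x_nonneg: "\<And>s \<omega>. 0 \<le> x s \<omega>"
    and x_Suc: "\<And>s \<omega>. s < R \<Longrightarrow> x (Suc s) \<omega> \<le> g s \<omega> + LC * d s \<omega>"
    and d_0: "\<And>\<omega>. d 0 \<omega> = 0"
    and d_Suc: "\<And>s \<omega>. d (Suc s) \<omega> \<le> x (Suc s) \<omega> + e (Suc s) \<omega>"
    and g: "\<And>s. s < R \<Longrightarrow> L2_bounded M (g s) (\<gamma> s)"
    and e: "\<And>s b. s \<in> {1..R} \<Longrightarrow> L2_bounded M (x s) b \<Longrightarrow> L2_bounded M (e s) (\<epsilon> + w * b)"
    and \<gamma>: "\<And>s. s < R \<Longrightarrow> \<gamma> s + LC * \<epsilon> \<le> \<beta> ^ s * W"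
    and LC: "0 \<le> LC" "LC * (1 + w) \<le> \<beta>"
    and nonneg: "0 \<le> \<epsilon>" "0 \<le> w" "0 \<le> W"
    and s: "s \<in> {1..R}"
  shows "L2_bounded M (x s) (\<beta> ^ (s - 1) * (real s * W))"
proof -
  have "0 \<le> LC * (1 + w)" using LC nonneg by simp
  then have \<beta>: "0 \<le> \<beta>" using LC by linarith
  have main: "L2_bounded M (x (Suc n)) (\<beta> ^ n * (real (Suc n) * W))" if "Suc n \<le> R" for n
    using that
  proof (induction n)
    case 0
    have "L2_bounded M (x 1) (\<gamma> 0)"
    proof (rule L2_bounded_dominated[OF x_meas x_nonneg _ g])
      show "x 1 \<omega> \<le> g 0 \<omega>" for \<omega> using x_Suc[of 0 \<omega>] d_0[of \<omega>] 0 by simp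
    qed (use 0 in auto)
    moreover have "\<gamma> 0 \<le> W" using \<gamma>[of 0] 0 mult_nonneg_nonneg[OF LC(1) nonneg(1)] by simp
    ultimately show ?case by (simp add: L2_bounded_mono_bound)
  next
    case (Suc n)
    define B where "B = \<beta> ^ n * (real (Suc n) * W)"
    have B: "0 \<le> B" unfolding B_def using \<beta> nonneg by simp
    have x: "L2_bounded M (x (Suc n)) B" using Suc unfolding B_def by simp
    have dom: "L2_bounded M (\<lambda>\<omega>. g (Suc n) \<omega> + LC * (x (Suc n) \<omega> + e (Suc n) \<omega>))
        (\<gamma> (Suc n) + LC * (B + (\<epsilon> + w * B)))"
      using Suc.prems LC x e[OF _ x] g
      by (intro L2_bounded_add L2_bounded_cmult) auto
    have "L2_bounded M (x (Suc (Suc n))) (\<gamma> (Suc n) + LC * (B + (\<epsilon> + w * B)))"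
    proof (rule L2_bounded_dominated[OF x_meas x_nonneg _ dom])
      show "x (Suc (Suc n)) \<omega> \<le> g (Suc n) \<omega> + LC * (x (Suc n) \<omega> + e (Suc n) \<omega>)" for \<omega>
        using x_Suc[of "Suc n" \<omega>] mult_left_mono[OF d_Suc[of n \<omega>] LC(1)] Suc.prems by simp
    qed (use Suc.prems in auto)
    moreover have "\<gamma> (Suc n) + LC * (B + (\<epsilon> + w * B)) \<le> \<beta> ^ Suc n * (real (Suc (Suc n)) * W)"
    proof -
      have "LC * (1 + w) * B \<le> \<beta> * B" using mult_right_mono[OF LC(2) B] .
      moreover have "\<beta> * B = \<beta> ^ Suc n * (real (Suc n) * W)" unfolding B_def by simp
      ultimately show ?thesis using \<gamma>[of "Suc n"] Suc.prems by (simp add: algebra_simps)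
    qed
    ultimately show ?case by (rule L2_bounded_mono_bound)
  qed
  obtain n where "s = Suc n" using s by (cases s) auto
  then show ?thesis using main[of n] s by simp
qed

lemma double_sum_power_le:
  fixes LC \<beta> \<epsilon> w W :: real
  assumes LC: "0 \<le> LC" "LC \<le> \<beta>" and \<beta>: "1 \<le> \<beta>" and nonneg: "0 \<le> \<epsilon>" "0 \<le> w" "0 \<le> W"
  shows "(\<Sum>s\<in>{1..R}. \<Sum>t\<in>{1..s}. LC ^ (s - t) * (\<epsilon> + w * (\<beta> ^ (t - 1) * (real t * W))))
     \<le> (real R)\<^sup>2 * (\<beta> ^ (R - 1) * (\<epsilon> + w * (real R * W)))"
proof -
  define c where "c = \<beta> ^ (R - 1) * (\<epsilon> + w * (real R * W))"
  have c_nonneg: "0 \<le> c" unfolding c_def using \<beta> nonneg by simp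
  have term_le: "LC ^ (s - t) * (\<epsilon> + w * (\<beta> ^ (t - 1) * (real t * W))) \<le> c"
    if st: "s \<in> {1..R}" "t \<in> {1..s}" for s t
  proof -
    have LC_pow: "LC ^ (s - t) \<le> \<beta> ^ (s - t)" using LC by (intro power_mono) auto
    have "\<beta> ^ (s - t) \<le> \<beta> ^ (R - 1)" using st \<beta> by (intro power_increasing) auto
    then have a: "LC ^ (s - t) * \<epsilon> \<le> \<beta> ^ (R - 1) * \<epsilon>"
      using LC_pow nonneg by (intro mult_right_mono) auto
    have "LC ^ (s - t) * \<beta> ^ (t - 1) \<le> \<beta> ^ (s - t) * \<beta> ^ (t - 1)"
      using LC_pow \<beta> by (intro mult_right_mono) auto
    also have "\<dots> = \<beta> ^ (s - 1)" using st by (simp add: power_add[symmetric])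
    also have "\<dots> \<le> \<beta> ^ (R - 1)" using st \<beta> by (intro power_increasing) auto
    finally have "(w * W * real t) * (LC ^ (s - t) * \<beta> ^ (t - 1)) \<le> (w * W * real R) * \<beta> ^ (R - 1)"
      using st nonneg LC \<beta> by (intro mult_mono) auto
    with a show ?thesis unfolding c_def by (simp add: algebra_simps)
  qed
  have "(\<Sum>s\<in>{1..R}. \<Sum>t\<in>{1..s}. LC ^ (s - t) * (\<epsilon> + w * (\<beta> ^ (t - 1) * (real t * W))))
      \<le> (\<Sum>s\<in>{1..R}. \<Sum>t\<in>{1..R}. c)"
  proof (intro sum_mono)
    fix s assume s: "s \<in> {1..R}"
    have "(\<Sum>t\<in>{1..s}. LC ^ (s - t) * (\<epsilon> + w * (\<beta> ^ (t - 1) * (real t * W)))) \<le> (\<Sum>t\<in>{1..s}. c)"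
      using term_le s by (intro sum_mono) auto
    also have "\<dots> \<le> (\<Sum>t\<in>{1..R}. c)"
      using s c_nonneg by (intro sum_mono2) auto
    finally show "(\<Sum>t\<in>{1..s}. LC ^ (s - t) * (\<epsilon> + w * (\<beta> ^ (t - 1) * (real t * W)))) \<le> (\<Sum>t\<in>{1..R}. c)" .
  qed
  then show ?thesis unfolding c_def by (simp add: power2_eq_square algebra_simps)
qed

section \<open>Linear convergence in mean square\<close>

lemma psi_ge_1: "1 \<le> psi R LC"
  unfolding psi_def by simp

lemma psi_eq_power:
  assumes "0 \<le> LC"
  shows "psi R LC = (max 1 (2 * LC)) ^ (R - 1)"
proof (cases "2 * LC \<le> 1")
  case True
  then have "(2 * LC) ^ (R - 1) \<le> 1" using assms by (intro power_le_one) auto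
  then show ?thesis unfolding psi_def using True by (simp add: max_absorb1 del: power_mult_distrib)
next
  case False
  then have "1 \<le> (2 * LC) ^ (R - 1)" by (intro one_le_power) auto
  then show ?thesis unfolding psi_def using False by (simp add: max_absorb2 del: power_mult_distrib)
qed

locale qm_quantized = qm_scheme Z C A R zinf nrm lam LA LC LZ
  for Z :: "'z::euclidean_space set"
    and C :: "nat \<Rightarrow> 'z \<Rightarrow> real^'d^'m \<Rightarrow> real^'d^'m"
    and A R zinf nrm lam LA LC LZ +
  fixes M :: "'a measure"
    and F :: "nat \<Rightarrow> nat \<Rightarrow> 'a measure"
    and Q :: "nat \<Rightarrow> nat \<Rightarrow> 'm \<Rightarrow> 'a \<Rightarrow> real^'d \<Rightarrow> real^'d"
    and z0 :: 'z
    and \<sigma> \<eta>0 w :: real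
  assumes R_pos: "1 \<le> R"
    and norm_le_nrm: "\<forall>x. norm x \<le> nrm x"
    and lam_pos: "0 < lam"
    and sigma: "lam < \<sigma>" "\<sigma> < 1"
    and LZ_pos: "0 < LZ"
    and eta0: "0 < \<eta>0"
    and w: "0 \<le> w" "w < omega_bar R lam LA LC LZ \<sigma>"
    and z0: "z0 \<in> Z"
    and prob: "prob_space M"
    and subalg: "\<forall>k s. subalgebra M (F k s)"
    and hist_meas: "\<forall>k. \<forall>s\<in>{1..R}. \<forall>i.
        (\<lambda>\<omega>. qm_input A C R (\<lambda>k s. blockQ (\<lambda>i. Q k s i \<omega>)) z0 k s $ i) \<in> borel_measurable (F k s)"
    and z_meas: "\<forall>k. (\<lambda>\<omega>. qm_z A C R (\<lambda>k s. blockQ (\<lambda>i. Q k s i \<omega>)) z0 k) \<in> borel_measurable M"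
    and BC: "\<forall>k. \<forall>s\<in>{1..R}. \<forall>i. \<forall>X \<in> borel_measurable (F k s).
        (\<lambda>\<omega>. Q k s i \<omega> (X \<omega>)) \<in> borel_measurable M \<and>
        (AE \<omega> in M. nn_cond_exp M (F k s)
            (\<lambda>\<omega>'. ennreal ((norm (Q k s i \<omega>' (X \<omega>') - X \<omega>'))\<^sup>2)) \<omega>
          \<le> ennreal ((sqrt (real CARD('d)) * (\<eta>0 * \<sigma>^k) + w * norm (X \<omega>))\<^sup>2))"
begin

sublocale prob_space M by (fact prob)

definition eps0 :: real where "eps0 = sqrt (real (CARD('m) * CARD('d))) * \<eta>0"

definition V_init :: real where
  "V_init = max ((1 / LZ) * Max ((\<lambda>s. norm (C s z0 0)) ` {1..R})) (nrm (z0 - zinf))"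

definition V0 :: real where
  "V0 = V_init
     + (LA * psi R LC * sqrt (real (CARD('m) * CARD('d))) * (real R)\<^sup>2 * \<eta>0 / (\<sigma> - lam))
       * ((1 + (real R * w / \<sigma>) * ((1 + LC * \<sigma>) * psi R LC - 1))
          / (1 - w / omega_bar R lam LA LC LZ \<sigma>))"

definition W :: real where "W = (2 * LZ * V0 + eps0 * (1 + LC * \<sigma>)) / (\<sigma> - real R * w)"

definition \<beta> :: real where "\<beta> = max 1 (2 * LC)"

lemma sigma_pos: "0 < \<sigma>"
  using lam_pos sigma by simp

lemma eps0_nonneg: "0 \<le> eps0"
  unfolding eps0_def using eta0 by simp

lemma V_init_nonneg: "0 \<le> V_init"
  unfolding V_init_def using is_norm_nonneg[OF nrm] by (simp add: le_max_iff_disj)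

lemma norm_C_z0_le:
  assumes "s \<in> {1..R}"
  shows "norm (C s z0 0) \<le> LZ * V_init"
proof -
  have "norm (C s z0 0) \<le> Max ((\<lambda>s. norm (C s z0 0)) ` {1..R})"
    using assms by (intro Max_ge) auto
  also have "\<dots> = LZ * ((1 / LZ) * Max ((\<lambda>s. norm (C s z0 0)) ` {1..R}))"
    using LZ_pos by simp
  also have "\<dots> \<le> LZ * V_init"
    unfolding V_init_def using LZ_pos by (intro mult_left_mono) auto
  finally show ?thesis .
qed

lemma omega_bar_pos: "0 < omega_bar R lam LA LC LZ \<sigma>"
  using R_pos sigma sigma_pos LA_nonneg LZ_pos
  unfolding omega_bar_def by (intro mult_pos_pos divide_pos_pos add_pos_nonneg) auto

lemma omega_bar_le: "omega_bar R lam LA LC LZ \<sigma> \<le> \<sigma> / real R"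
proof -
  have "0 \<le> 2 * LA * LZ * (real R * psi R LC)\<^sup>2" using LA_nonneg LZ_pos by simp
  then have "(\<sigma> - lam) / (\<sigma> - lam + 2 * LA * LZ * (real R * psi R LC)\<^sup>2) \<le> 1"
    using sigma by (simp add: divide_le_eq_1)
  then show ?thesis
    unfolding omega_bar_def using sigma_pos by (intro mult_left_le) auto
qed

lemma Rw_lt_sigma: "real R * w < \<sigma>"
proof -
  have "real R * w < real R * omega_bar R lam LA LC LZ \<sigma>" using w R_pos by simp
  also have "\<dots> \<le> \<sigma>" using omega_bar_le R_pos by (simp add: field_simps)
  finally show ?thesis .
qed

lemma w_le_1: "w \<le> 1"
  using mult_right_mono[of 1 "real R" w] R_pos w Rw_lt_sigma sigma by simp

lemma beta_ge_1: "1 \<le> \<beta>"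
  unfolding \<beta>_def by simp

lemma LC_le_beta: "LC \<le> \<beta>"
  unfolding \<beta>_def using LC_nonneg by simp

lemma LC_one_plus_w_le_beta: "LC * (1 + w) \<le> \<beta>"
proof -
  have "LC * (1 + w) \<le> LC * 2" using w_le_1 LC_nonneg by (intro mult_left_mono) auto
  then show ?thesis unfolding \<beta>_def by simp
qed

lemma psi_eq_beta_power: "psi R LC = \<beta> ^ (R - 1)"
  unfolding \<beta>_def using psi_eq_power[OF LC_nonneg] .

definition q :: real where "q = real R * w / \<sigma>"

definition K :: real where "K = LA * (real R)\<^sup>2 * psi R LC / (\<sigma> - lam)"

lemma q_nonneg: "0 \<le> q"
  unfolding q_def using w sigma_pos by simp

lemma q_lt_1: "q < 1"
  unfolding q_def using Rw_lt_sigma sigma_pos by simp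

lemma K_nonneg: "0 \<le> K"
  unfolding K_def using LA_nonneg psi_ge_1[of R LC] sigma by simp

lemma omega_ratio: "w / omega_bar R lam LA LC LZ \<sigma> = q * (1 + 2 * LZ * psi R LC * K)"
  unfolding omega_bar_def q_def K_def using sigma sigma_pos R_pos
  by (simp add: field_simps power2_eq_square)

lemma omega_ratio_lt_1: "w / omega_bar R lam LA LC LZ \<sigma> < 1"
  using w omega_bar_pos by simp

lemma V0_eq:
  "V0 = V_init + K * eps0 * (1 + q * ((1 + LC * \<sigma>) * psi R LC - 1)) / (1 - w / omega_bar R lam LA LC LZ \<sigma>)"
  unfolding V0_def K_def q_def eps0_def by (simp add: field_simps)

lemma V0_ge_V_init: "V_init \<le> V0"
proof -
  have "0 \<le> (1 + LC * \<sigma>) * psi R LC - 1"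
    using psi_ge_1[of R LC] LC_nonneg sigma_pos by (simp add: algebra_simps add_increasing2)
  then have "0 \<le> K * eps0 * (1 + q * ((1 + LC * \<sigma>) * psi R LC - 1))"
    using K_nonneg eps0_nonneg q_nonneg by simp
  then show ?thesis unfolding V0_eq using omega_ratio_lt_1 by simp
qed

lemma V0_nonneg: "0 \<le> V0"
  using V0_ge_V_init V_init_nonneg by simp

lemma W_eq: "W * (\<sigma> - real R * w) = 2 * LZ * V0 + eps0 * (1 + LC * \<sigma>)"
  unfolding W_def using Rw_lt_sigma by simp

lemma W_nonneg: "0 \<le> W"
  unfolding W_def using Rw_lt_sigma LZ_pos V0_nonneg eps0_nonneg LC_nonneg sigma_pos by simp

lemma W_sigma_bound: "LZ * V0 * (1 + \<sigma>) + LC * eps0 * \<sigma> + eps0 + real R * w * W \<le> W * \<sigma>"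
proof -
  have "LZ * V0 * (1 + \<sigma>) \<le> LZ * V0 * 2"
    using LZ_pos V0_nonneg sigma by (intro mult_left_mono) auto
  then show ?thesis using W_eq by (simp add: algebra_simps)
qed

lemma W_bound: "LZ * V0 + LC * eps0 \<le> W"
proof -
  have "0 \<le> LZ * V0" "0 \<le> real R * w * W" using LZ_pos V0_nonneg w W_nonneg by simp_all
  then have "\<sigma> * (LZ * V0 + LC * eps0) \<le> LZ * V0 * (1 + \<sigma>) + LC * eps0 * \<sigma> + eps0 + real R * w * W"
    using eps0_nonneg by (simp add: algebra_simps)
  also have "\<dots> \<le> \<sigma> * W" using W_sigma_bound by (simp add: mult.commute)
  finally show ?thesis using sigma_pos by simp
qed

lemma V0_contraction:
  "lam * V0 + LA * (real R)\<^sup>2 * psi R LC * (eps0 + w * (real R * W)) \<le> \<sigma> * V0"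
proof -
  define N where "N = 1 + q * ((1 + LC * \<sigma>) * psi R LC - 1)"
  define T where "T = 1 - w / omega_bar R lam LA LC LZ \<sigma>"
  have T: "0 < T" unfolding T_def using omega_ratio_lt_1 by simp
  have N: "1 + q * LC * \<sigma> \<le> N"
  proof -
    have "LC * \<sigma> \<le> (1 + LC * \<sigma>) * psi R LC - 1"
      using mult_left_mono[OF psi_ge_1, of "1 + LC * \<sigma>" R LC] LC_nonneg sigma_pos by simp
    then show ?thesis unfolding N_def using q_nonneg by (simp add: mult_left_mono mult.assoc)
  qed
  have "K * eps0 * (1 + q * LC * \<sigma>) \<le> K * eps0 * N"
    using N K_nonneg eps0_nonneg by (simp add: mult_left_mono)
  also have "K * eps0 * N \<le> V0 * T"
  proof -
    have "V0 = V_init + K * eps0 * N / T" unfolding V0_eq N_def T_def ..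
    then have "V0 * T = V_init * T + K * eps0 * N" using T by (simp add: field_simps)
    then show ?thesis using V_init_nonneg T by simp
  qed
  also have "V0 * T \<le> V0 * (1 - q - 2 * LZ * K * q)"
  proof -
    have "2 * LZ * K * q \<le> 2 * LZ * K * q * psi R LC"
      using mult_left_mono[OF psi_ge_1, of "2 * LZ * K * q" R LC] LZ_pos K_nonneg q_nonneg by simp
    then show ?thesis
      unfolding T_def omega_ratio using V0_nonneg by (intro mult_left_mono) (auto simp: algebra_simps)
  qed
  finally have key: "K * eps0 * (1 + q * LC * \<sigma>) + 2 * LZ * K * q * V0 \<le> V0 * (1 - q)"
    by (simp add: algebra_simps)
  have wRW: "w * (real R * W) * (1 - q) = q * (2 * LZ * V0 + eps0 * (1 + LC * \<sigma>))"
    unfolding q_def W_eq[symmetric] using sigma_pos by (simp add: field_simps)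
  have "K * (eps0 + w * (real R * W)) * (1 - q) = K * eps0 * (1 - q) + K * (w * (real R * W) * (1 - q))"
    by (simp add: algebra_simps)
  also have "\<dots> = K * eps0 * (1 + q * LC * \<sigma>) + 2 * LZ * K * q * V0"
    unfolding wRW by (simp add: algebra_simps)
  finally have "K * (eps0 + w * (real R * W)) * (1 - q) \<le> V0 * (1 - q)"
    using key by simp
  then have "K * (eps0 + w * (real R * W)) \<le> V0"
    using key q_lt_1 by (simp add: mult_le_cancel_right_pos)
  then show ?thesis
    unfolding K_def using sigma by (simp add: field_simps)
qed

abbreviation quant :: "'a \<Rightarrow> nat \<Rightarrow> nat \<Rightarrow> real^'d^'m \<Rightarrow> real^'d^'m" where
  "quant \<omega> \<equiv> \<lambda>k s. blockQ (\<lambda>i. Q k s i \<omega>)"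

definition deviation :: "nat \<Rightarrow> 'a \<Rightarrow> real" where
  "deviation k \<omega> = nrm (qm_z A C R (quant \<omega>) z0 k - zinf)"

definition input_norm :: "nat \<Rightarrow> nat \<Rightarrow> 'a \<Rightarrow> real" where
  "input_norm k s \<omega> = norm (qm_input A C R (quant \<omega>) z0 k s)"

definition error_norm :: "nat \<Rightarrow> nat \<Rightarrow> 'a \<Rightarrow> real" where
  "error_norm k s \<omega> = norm (qm_err A C R (quant \<omega>) z0 k s)"

definition increment :: "nat \<Rightarrow> nat \<Rightarrow> 'a \<Rightarrow> real" where
  "increment k s \<omega> = norm (qm_hatc A C R (quant \<omega>) z0 k s - qm_prev A C R (quant \<omega>) z0 k s)"

definition input_bound :: "nat \<Rightarrow> nat \<Rightarrow> real" where
  "input_bound k s = \<beta> ^ (s - 1) * (real s * (W * \<sigma> ^ k))"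

lemma iterate_in_Z: "qm_z A C R (quant \<omega>) z0 k \<in> Z"
  by (rule qm_z_in[OF z0])

lemma deviation_nonneg: "0 \<le> deviation k \<omega>"
  unfolding deviation_def by (rule is_norm_nonneg[OF nrm])

lemma input_norm_nonneg: "0 \<le> input_norm k s \<omega>"
  unfolding input_norm_def by simp

lemma deviation_measurable: "deviation k \<in> borel_measurable M"
proof -
  have "(\<lambda>\<omega>. qm_z A C R (quant \<omega>) z0 k - zinf) \<in> borel_measurable M"
    by (intro borel_measurable_diff z_meas[rule_format] borel_measurable_const)
  from measurable_compose[OF this borel_measurable_is_norm[OF nrm]] show ?thesis
    unfolding deviation_def .
qed

lemma input_norm_measurable:
  assumes "s \<in> {1..R}"
  shows "input_norm k s \<in> borel_measurable M"
proof -
  have "(\<lambda>\<omega>. qm_input A C R (quant \<omega>) z0 k s $ i) \<in> borel_measurable M" for i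
    using measurable_from_subalg[OF subalg[rule_format] hist_meas[rule_format, OF assms]] .
  then show ?thesis
    unfolding input_norm_def by (intro borel_measurable_norm_vec measurable_compose[OF _ borel_measurable_norm])
qed

lemma error_norm_L2_bounded:
  assumes "s \<in> {1..R}" "L2_bounded M (input_norm k s) b"
  shows "L2_bounded M (error_norm k s) (eps0 * \<sigma> ^ k + w * b)"
proof -
  have "L2_bounded M (error_norm k s) (sqrt (real (CARD('m) * CARD('d))) * (\<eta>0 * \<sigma> ^ k) + w * b)"
    unfolding error_norm_def qm_err_def
  proof (rule blockQ_error_L2_bounded[OF subalg[rule_format]])
    show "(\<lambda>\<omega>. qm_input A C R (quant \<omega>) z0 k s $ i) \<in> borel_measurable (F k s)" for i
      using hist_meas assms(1) by blast
    show "L2_bounded M (\<lambda>\<omega>. norm (qm_input A C R (quant \<omega>) z0 k s)) b"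
      using assms(2) unfolding input_norm_def .
  qed (use BC assms(1) eta0 sigma_pos w in auto)
  then show ?thesis unfolding eps0_def by (simp add: mult.assoc)
qed

lemma deviation_Suc_le:
  "deviation (Suc k) \<omega>
     \<le> lam * deviation k \<omega> + LA * (\<Sum>s\<in>{1..R}. \<Sum>t\<in>{1..s}. LC ^ (s - t) * error_norm k t \<omega>)"
  unfolding deviation_def error_norm_def by (rule qm_z_Suc_dist_le[OF iterate_in_Z])

lemma increment_0: "increment k 0 \<omega> = 0"
  unfolding increment_def by (simp add: qm_hatc_0 qm_prev_at_0)

lemma increment_Suc_le: "increment k (Suc s) \<omega> \<le> input_norm k (Suc s) \<omega> + error_norm k (Suc s) \<omega>"
  unfolding increment_def input_norm_def error_norm_def qm_hatc_minus_prev by (rule norm_triangle_ineq)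

lemma input_norm_0_Suc_le: "s < R \<Longrightarrow> input_norm 0 (Suc s) \<omega> \<le> LZ * V_init + LC * increment 0 s \<omega>"
  unfolding input_norm_def increment_def
  using qm_input_0_norm_le[OF z0, where s = "Suc s" and Q = "quant \<omega>"] norm_C_z0_le[of "Suc s"] by simp

lemma input_norm_Suc_Suc_le:
  assumes "s < R"
  shows "input_norm (Suc k) (Suc s) \<omega>
    \<le> (LZ * (deviation (Suc k) \<omega> + deviation k \<omega>) + error_norm k (Suc s) \<omega>) + LC * increment (Suc k) s \<omega>"
proof -
  let ?z = "\<lambda>k. qm_z A C R (quant \<omega>) z0 k"
  have "norm (?z (Suc k) - ?z k) \<le> norm (?z (Suc k) - zinf) + norm (?z k - zinf)"
    using norm_triangle_ineq4[of "?z (Suc k) - zinf" "?z k - zinf"] by simp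
  also have "\<dots> \<le> deviation (Suc k) \<omega> + deviation k \<omega>"
    unfolding deviation_def using norm_le_nrm by (intro add_mono) auto
  finally have "LZ * norm (?z (Suc k) - ?z k) \<le> LZ * (deviation (Suc k) \<omega> + deviation k \<omega>)"
    using LZ_pos by simp
  moreover have "input_norm (Suc k) (Suc s) \<omega>
      \<le> LZ * norm (?z (Suc k) - ?z k) + LC * increment (Suc k) s \<omega> + error_norm k (Suc s) \<omega>"
    using qm_input_Suc_norm_le[OF iterate_in_Z iterate_in_Z, of "Suc s"] assms
    unfolding input_norm_def error_norm_def increment_def by simp
  ultimately show ?thesis by linarith
qed

lemma input_norm_0_L2_bounded:
  assumes "s \<in> {1..R}"
  shows "L2_bounded M (input_norm 0 s) (input_bound 0 s)"
proof -
  have "L2_bounded M (input_norm 0 s) (\<beta> ^ (s - 1) * (real s * W))"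
  proof (rule L2_bounded_chain[where \<gamma> = "\<lambda>_. LZ * V_init" and \<epsilon> = eps0 and w = w and \<beta> = \<beta> and W = W,
        OF input_norm_measurable input_norm_nonneg input_norm_0_Suc_le increment_0 increment_Suc_le])
    show "L2_bounded M (\<lambda>_. LZ * V_init) (LZ * V_init)"
      using LZ_pos V_init_nonneg by (intro L2_bounded_const) simp
    show "L2_bounded M (error_norm 0 s) (eps0 + w * b)" if "s \<in> {1..R}" "L2_bounded M (input_norm 0 s) b" for s b
      using error_norm_L2_bounded[OF that] by simp
    show "LZ * V_init + LC * eps0 \<le> \<beta> ^ s * W" for s
    proof -
      have "LZ * V_init + LC * eps0 \<le> W" using W_bound V0_ge_V_init LZ_pos by (smt (verit) mult_left_mono)
      also have "W \<le> \<beta> ^ s * W" using W_nonneg beta_ge_1 by (simp add: mult_le_cancel_right1 one_le_power)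
      finally show ?thesis .
    qed
  qed (use assms LC_nonneg LC_one_plus_w_le_beta eps0_nonneg w W_nonneg in auto)
  then show ?thesis unfolding input_bound_def by simp
qed

lemma input_chain_condition:
  assumes "s < R"
  shows "LZ * (V0 * \<sigma> ^ Suc k + V0 * \<sigma> ^ k) + (eps0 * \<sigma> ^ k + w * input_bound k (Suc s))
      + LC * (eps0 * \<sigma> ^ Suc k) \<le> \<beta> ^ s * (W * \<sigma> ^ Suc k)"
proof -
  define X where "X = LZ * V0 * (1 + \<sigma>) + LC * eps0 * \<sigma> + eps0"
  have X: "0 \<le> X" unfolding X_def using LZ_pos V0_nonneg LC_nonneg eps0_nonneg sigma_pos by simp
  have \<beta>: "1 \<le> \<beta> ^ s" using beta_ge_1 by simp
  have "X \<le> \<beta> ^ s * X" using \<beta> X by (simp add: mult_le_cancel_right1)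
  moreover have "w * (\<beta> ^ s * (real (Suc s) * W)) \<le> \<beta> ^ s * (real R * w * W)"
  proof -
    have "0 \<le> w * \<beta> ^ s * W" using w W_nonneg \<beta> by simp
    then have "real (Suc s) * (w * \<beta> ^ s * W) \<le> real R * (w * \<beta> ^ s * W)"
      using assms by (intro mult_right_mono) auto
    then show ?thesis by (simp add: algebra_simps)
  qed
  ultimately have "X + w * (\<beta> ^ s * (real (Suc s) * W)) \<le> \<beta> ^ s * (X + real R * w * W)"
    by (simp add: algebra_simps)
  also have "\<dots> \<le> \<beta> ^ s * (W * \<sigma>)"
    using W_sigma_bound \<beta> unfolding X_def by (intro mult_left_mono) auto
  finally have "(X + w * (\<beta> ^ s * (real (Suc s) * W))) * \<sigma> ^ k \<le> \<beta> ^ s * (W * \<sigma>) * \<sigma> ^ k"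
    using sigma_pos by (intro mult_right_mono) auto
  then show ?thesis unfolding X_def input_bound_def by (simp add: algebra_simps)
qed

lemma input_norm_Suc_L2_bounded:
  assumes dev: "L2_bounded M (deviation (Suc k)) (V0 * \<sigma> ^ Suc k)" "L2_bounded M (deviation k) (V0 * \<sigma> ^ k)"
    and inp: "\<forall>s\<in>{1..R}. L2_bounded M (input_norm k s) (input_bound k s)"
    and s: "s \<in> {1..R}"
  shows "L2_bounded M (input_norm (Suc k) s) (input_bound (Suc k) s)"
  unfolding input_bound_def
proof (rule L2_bounded_chain[where \<gamma> = "\<lambda>s. LZ * (V0 * \<sigma> ^ Suc k + V0 * \<sigma> ^ k)
      + (eps0 * \<sigma> ^ k + w * input_bound k (Suc s))" and \<epsilon> = "eps0 * \<sigma> ^ Suc k" and w = w and \<beta> = \<beta>,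
      OF input_norm_measurable input_norm_nonneg input_norm_Suc_Suc_le increment_0 increment_Suc_le])
  show "L2_bounded M (\<lambda>\<omega>. LZ * (deviation (Suc k) \<omega> + deviation k \<omega>) + error_norm k (Suc s) \<omega>)
      (LZ * (V0 * \<sigma> ^ Suc k + V0 * \<sigma> ^ k) + (eps0 * \<sigma> ^ k + w * input_bound k (Suc s)))"
    if "s < R" for s
    using that dev inp LZ_pos
    by (intro L2_bounded_add L2_bounded_cmult error_norm_L2_bounded) auto
  show "L2_bounded M (error_norm (Suc k) s) (eps0 * \<sigma> ^ Suc k + w * b)"
    if "s \<in> {1..R}" "L2_bounded M (input_norm (Suc k) s) b" for s b
    using error_norm_L2_bounded[OF that] .
qed (use s input_chain_condition LC_nonneg LC_one_plus_w_le_beta eps0_nonneg sigma_pos w W_nonneg in auto)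

lemma deviation_Suc_L2_bounded:
  assumes dev: "L2_bounded M (deviation k) (V0 * \<sigma> ^ k)"
    and inp: "\<forall>s\<in>{1..R}. L2_bounded M (input_norm k s) (input_bound k s)"
  shows "L2_bounded M (deviation (Suc k)) (V0 * \<sigma> ^ Suc k)"
proof -
  let ?err_bound = "\<lambda>t. eps0 * \<sigma> ^ k + w * input_bound k t"
  have "L2_bounded M (error_norm k t) (?err_bound t)" if "t \<in> {1..R}" for t
    using error_norm_L2_bounded that inp by blast
  then have "L2_bounded M
      (\<lambda>\<omega>. lam * deviation k \<omega> + LA * (\<Sum>s\<in>{1..R}. \<Sum>t\<in>{1..s}. LC ^ (s - t) * error_norm k t \<omega>))
      (lam * (V0 * \<sigma> ^ k) + LA * (\<Sum>s\<in>{1..R}. \<Sum>t\<in>{1..s}. LC ^ (s - t) * ?err_bound t))"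
    using dev lam_pos LA_nonneg LC_nonneg
    by (intro L2_bounded_add L2_bounded_cmult L2_bounded_sum) auto
  then have bound: "L2_bounded M (deviation (Suc k))
      (lam * (V0 * \<sigma> ^ k) + LA * (\<Sum>s\<in>{1..R}. \<Sum>t\<in>{1..s}. LC ^ (s - t) * ?err_bound t))"
    by (rule L2_bounded_dominated[OF deviation_measurable deviation_nonneg deviation_Suc_le])
  have sum_le: "(\<Sum>s\<in>{1..R}. \<Sum>t\<in>{1..s}. LC ^ (s - t) * ?err_bound t)
      \<le> (real R)\<^sup>2 * psi R LC * (eps0 + w * (real R * W)) * \<sigma> ^ k"
    using double_sum_power_le[OF LC_nonneg LC_le_beta beta_ge_1, of "eps0 * \<sigma> ^ k" w "W * \<sigma> ^ k" R]
      eps0_nonneg w W_nonneg sigma_pos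
    unfolding input_bound_def psi_eq_beta_power by (simp add: algebra_simps)
  have "lam * (V0 * \<sigma> ^ k) + LA * (\<Sum>s\<in>{1..R}. \<Sum>t\<in>{1..s}. LC ^ (s - t) * ?err_bound t)
      \<le> (lam * V0 + LA * (real R)\<^sup>2 * psi R LC * (eps0 + w * (real R * W))) * \<sigma> ^ k"
    using mult_left_mono[OF sum_le LA_nonneg] by (simp add: algebra_simps)
  also have "\<dots> \<le> V0 * \<sigma> ^ Suc k"
    using mult_right_mono[OF V0_contraction, of "\<sigma> ^ k"] sigma_pos by (simp add: algebra_simps)
  finally show ?thesis by (rule L2_bounded_mono_bound[OF bound])
qed

lemma iterate_L2_bounds:
  "L2_bounded M (deviation k) (V0 * \<sigma> ^ k) \<and> (\<forall>s\<in>{1..R}. L2_bounded M (input_norm k s) (input_bound k s))"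
proof (induction k)
  case 0
  have "L2_bounded M (\<lambda>_. nrm (z0 - zinf)) (nrm (z0 - zinf))"
    by (intro L2_bounded_const is_norm_nonneg[OF nrm])
  moreover have "nrm (z0 - zinf) \<le> V0" using V0_ge_V_init unfolding V_init_def by simp
  ultimately have "L2_bounded M (deviation 0) (V0 * \<sigma> ^ 0)"
    unfolding deviation_def by (simp add: qm_z_0 L2_bounded_mono_bound)
  then show ?case using input_norm_0_L2_bounded by blast
next
  case (Suc k)
  then have "L2_bounded M (deviation (Suc k)) (V0 * \<sigma> ^ Suc k)" by (intro deviation_Suc_L2_bounded) auto
  with Suc show ?case using input_norm_Suc_L2_bounded by blast
qed

lemma iterate_mean_square_le:
  "(\<integral>\<^sup>+ \<omega>. ennreal ((norm (qm_z A C R (quant \<omega>) z0 k - zinf))\<^sup>2) \<partial>M) \<le> ennreal ((V0 * \<sigma> ^ k)\<^sup>2)"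
proof -
  have "(\<integral>\<^sup>+ \<omega>. ennreal ((norm (qm_z A C R (quant \<omega>) z0 k - zinf))\<^sup>2) \<partial>M)
      \<le> (\<integral>\<^sup>+ \<omega>. ennreal ((deviation k \<omega>)\<^sup>2) \<partial>M)"
    unfolding deviation_def using norm_le_nrm by (intro nn_integral_mono ennreal_leI power_mono) auto
  also have "\<dots> \<le> ennreal ((V0 * \<sigma> ^ k)\<^sup>2)"
    using iterate_L2_bounds unfolding L2_bounded_def by blast
  finally show ?thesis .
qed

end

theorem theorem2:
  fixes Z :: "(real^'p) set"
    and C :: "nat \<Rightarrow> real^'p \<Rightarrow> real^'d^'m \<Rightarrow> real^'d^'m"
    and A :: "real^'p \<Rightarrow> (real^'d^'m) list \<Rightarrow> real^'p"
    and R :: nat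
    and zinf z0 :: "real^'p"
    and nrm :: "real^'p \<Rightarrow> real"
    and lam LA LC LZ \<sigma> \<eta>0 w :: real
    and M :: "'a measure"
    and F :: "nat \<Rightarrow> nat \<Rightarrow> 'a measure"
    and Q :: "nat \<Rightarrow> nat \<Rightarrow> 'm \<Rightarrow> 'a \<Rightarrow> real^'d \<Rightarrow> real^'d"
  defines "Qf \<equiv> (\<lambda>\<omega> k s. blockQ (\<lambda>i. Q k s i \<omega>))"
  assumes R: "R \<ge> 1"
    and A_maps: "\<forall>z\<in>Z. \<forall>cs. length cs = R \<longrightarrow> A z cs \<in> Z"
    and A1_fix: "zinf \<in> Z" "Atil A C R zinf = zinf"
    and A1_lam: "0 < lam" "lam < 1"
    and A1_norm: "is_norm nrm" "\<forall>x. norm x \<le> nrm x"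
    and A1_contr: "\<forall>z\<in>Z. nrm (Atil A C R z - zinf) \<le> lam * nrm (z - zinf)"
    and A2: "LA \<ge> 0"
      "\<forall>z\<in>Z. \<forall>cs s c'. length cs = R \<longrightarrow> s \<in> {1..R} \<longrightarrow>
          nrm (A z cs - A z (cs[s - 1 := c'])) \<le> LA * norm (cs ! (s - 1) - c')"
    and A3: "LC \<ge> 0" "LZ \<ge> 0"
      "\<forall>s\<in>{1..R}. \<forall>z\<in>Z. \<forall>c c'. norm (C s z c - C s z c') \<le> LC * norm (c - c')"
      "\<forall>s\<in>{1..R}. \<forall>z\<in>Z. \<forall>z'\<in>Z. \<forall>c. norm (C s z c - C s z' c) \<le> LZ * norm (z - z')"
    and LZ_pos: "LZ > 0"
    and sigma: "lam < \<sigma>" "\<sigma> < 1"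
    and eta0: "\<eta>0 > 0"
    and w: "0 \<le> w" "w < omega_bar R lam LA LC LZ \<sigma>"
    and z0: "z0 \<in> Z"
    and prob: "prob_space M"
    and subalg: "\<forall>k s. subalgebra M (F k s)"
    and hist_meas: "\<forall>k. \<forall>s\<in>{1..R}. \<forall>i.
        (\<lambda>\<omega>. qm_input A C R (Qf \<omega>) z0 k s $ i) \<in> borel_measurable (F k s)"
    and z_meas: "\<forall>k. (\<lambda>\<omega>. qm_z A C R (Qf \<omega>) z0 k) \<in> borel_measurable M"
    and BC: "\<forall>k. \<forall>s\<in>{1..R}. \<forall>i. \<forall>X \<in> borel_measurable (F k s).
        (\<lambda>\<omega>. Q k s i \<omega> (X \<omega>)) \<in> borel_measurable M \<and>
        (AE \<omega> in M. nn_cond_exp M (F k s)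
            (\<lambda>\<omega>'. ennreal ((norm (Q k s i \<omega>' (X \<omega>') - X \<omega>'))^2)) \<omega>
          \<le> ennreal ((sqrt (real CARD('d)) * (\<eta>0 * \<sigma>^k) + w * norm (X \<omega>))^2))"
  shows "\<forall>k. (\<integral>\<^sup>+ \<omega>. ennreal ((norm (qm_z A C R (Qf \<omega>) z0 k - zinf))^2) \<partial>M)
      \<le> ennreal ((
          (max ((1 / LZ) * Max ((\<lambda>s. norm (C s z0 0)) ` {1..R})) (nrm (z0 - zinf))
           + (LA * psi R LC * sqrt (real (CARD('m) * CARD('d))) * (real R)^2 * \<eta>0 / (\<sigma> - lam))
             * ((1 + (real R * w / \<sigma>) * ((1 + LC * \<sigma>) * psi R LC - 1))
                / (1 - w / omega_bar R lam LA LC LZ \<sigma>)))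
          * \<sigma>^k)^2)"
proof -
  interpret qm_quantized Z C A R zinf nrm lam LA LC LZ M F Q z0 \<sigma> \<eta>0 w
    using assms unfolding Qf_def
    by (intro qm_quantized.intro qm_scheme.intro qm_quantized_axioms.intro) assumption+
  show ?thesis
    using iterate_mean_square_le unfolding Qf_def V0_def V_init_def by blast
qed

end
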